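(* For all positive integers $d$ and $q$, there exists a connected graph $G$ with $\mathrm{diam}(G)=d$ and \[ \Delta(G)=\begin{cases} 2^{q}-1, & \text{if } d=1,\\ 2^{q}, & \text{if } d=2,\\ 2^{q}+1, & \text{if } d\geq 3,\end{cases} \] such that $G$ admits an interval edge coloring (i.e. $G\in\mathfrak{N}$) and \[ W(G)\geq \begin{cases} (d+1)(\Delta(G)-1)-q+2, & \text{if } d=1,\\ (d+1)(\Delta(G)-1)-q+1, & \text{if } d=2,\\ (d+1)(\Delta(G)-1)-q-2, & \text{if } d\geq 3.\end{cases} \]
   Context: All graphs are finite, undirected, without loops or multiple edges. $\Delta(G)$ denotes the maximum degree of $G$ and $\mathrm{diam}(G)$ its diameter. For a positive integer $t$, an interval $t$-coloring of a graph $G$ is a map assigning to each edge of $G$ a color from $\{1,2,\ldots,t\}$ such that every color $i\in\{1,\ldots,t\}$ is used on at least one edge, edges sharing a vertex receive distinct colors, and for each vertex $v$ the set of colors of edges incident to $v$ is an interval of consecutive integers. $\mathfrak{N}$ denotes the set of graphs that admit an interval $t$-coloring for some $t$, and for $G\in\mathfrak{N}$, $W(G)$ denotes the greatest $t$ for which $G$ has an interval $t$-coloring. *)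

theory Defs
  imports Main
begin

definition graph :: "'a set \<Rightarrow> 'a set set \<Rightarrow> bool" where
  "graph V E \<longleftrightarrow> finite V \<and> (\<forall>e\<in>E. \<exists>u v. e = {u, v} \<and> u \<noteq> v \<and> u \<in> V \<and> v \<in> V)"

definition edges_at :: "'a set set \<Rightarrow> 'a \<Rightarrow> 'a set set" where
  "edges_at E v = {e \<in> E. v \<in> e}"

definition degree :: "'a set set \<Rightarrow> 'a \<Rightarrow> nat" where
  "degree E v = card (edges_at E v)"

definition max_degree :: "'a set \<Rightarrow> 'a set set \<Rightarrow> nat" where
  "max_degree V E = Max (degree E ` V)"

definition walk :: "'a set set \<Rightarrow> 'a list \<Rightarrow> bool" where
  "walk E xs \<longleftrightarrow> xs \<noteq> [] \<and> (\<forall>i. Suc i < length xs \<longrightarrow> {xs ! i, xs ! Suc i} \<in> E)"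

definition walk_between :: "'a set set \<Rightarrow> 'a \<Rightarrow> 'a \<Rightarrow> 'a list \<Rightarrow> bool" where
  "walk_between E u v xs \<longleftrightarrow> walk E xs \<and> hd xs = u \<and> last xs = v"

definition connected_graph :: "'a set \<Rightarrow> 'a set set \<Rightarrow> bool" where
  "connected_graph V E \<longleftrightarrow> graph V E \<and> V \<noteq> {} \<and>
     (\<forall>u\<in>V. \<forall>v\<in>V. \<exists>xs. walk_between E u v xs)"

definition dist :: "'a set set \<Rightarrow> 'a \<Rightarrow> 'a \<Rightarrow> nat" where
  "dist E u v = (LEAST n. \<exists>xs. walk_between E u v xs \<and> length xs = Suc n)"

definition diam :: "'a set \<Rightarrow> 'a set set \<Rightarrow> nat" where
  "diam V E = Max {dist E u v | u v. u \<in> V \<and> v \<in> V}"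

definition interval_coloring :: "'a set \<Rightarrow> 'a set set \<Rightarrow> nat \<Rightarrow> ('a set \<Rightarrow> nat) \<Rightarrow> bool" where
  "interval_coloring V E t c \<longleftrightarrow>
     (\<forall>e\<in>E. c e \<in> {1..t}) \<and>
     (\<forall>i\<in>{1..t}. \<exists>e\<in>E. c e = i) \<and>
     (\<forall>v\<in>V. inj_on c (edges_at E v)) \<and>
     (\<forall>v\<in>V. \<exists>a b. c ` edges_at E v = {a..b})"

definition has_interval_coloring :: "'a set \<Rightarrow> 'a set set \<Rightarrow> nat \<Rightarrow> bool" where
  "has_interval_coloring V E t \<longleftrightarrow> t \<ge> 1 \<and> (\<exists>c. interval_coloring V E t c)"

definition in_N :: "'a set \<Rightarrow> 'a set set \<Rightarrow> bool" where
  "in_N V E \<longleftrightarrow> (\<exists>t. has_interval_coloring V E t)"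

definition W :: "'a set \<Rightarrow> 'a set set \<Rightarrow> nat" where
  "W V E = Max {t. has_interval_coloring V E t}"

end

theory Submission
  imports Defs
begin

text \<open>Let \<open>N = 2^q\<close>. The graph is the Cartesian product of \<open>K\<^sub>N\<close> with the path on \<open>d\<close>
vertices: \<open>d\<close> copies of \<open>K\<^sub>N\<close>, vertex \<open>x\<close> of copy \<open>j\<close> being joined to vertex \<open>x\<close> of copies \<open>j \<plusminus> 1\<close>. The complete graph \<open>K\<^sub>N\<close> has an interval colouring with colours \<open>1, \<dots>, 2N - q - 2\<close> in
which the spectrum of vertex \<open>x\<close> starts at \<open>x + 1 - s(x)\<close>, where \<open>s(x)\<close> is the binary digit sum
of \<open>x\<close>. Colour copy \<open>j\<close> by this colouring shifted by \<open>jN\<close>, and the edge at position \<open>x\<close> between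
copies \<open>j\<close> and \<open>j + 1\<close> by the colour just above the spectrum of \<open>x\<close> in copy \<open>j\<close>, which is also
just below the spectrum of \<open>x\<close> in copy \<open>j + 1\<close>. All spectra are then intervals, and the colours
fill \<open>{1, \<dots>, (d + 1)N - q - 2}\<close>; in each of the three cases this number is the claimed bound.\<close>

section \<open>Walks, distances and interval colourings\<close>

lemma walk_Cons2: "walk E (a # b # xs) \<longleftrightarrow> {a, b} \<in> E \<and> walk E (b # xs)"
proof
  assume h: "walk E (a # b # xs)"
  have "walk E (b # xs)"
    unfolding walk_def
  proof (intro conjI allI impI)
    fix i assume "Suc i < length (b # xs)"
    then have "Suc (Suc i) < length (a # b # xs)" by simp
    then have "{(a # b # xs) ! Suc i, (a # b # xs) ! Suc (Suc i)} \<in> E"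
      using h unfolding walk_def by blast
    then show "{(b # xs) ! i, (b # xs) ! Suc i} \<in> E" by simp
  qed simp
  moreover have "{a, b} \<in> E" using h unfolding walk_def by fastforce
  ultimately show "{a, b} \<in> E \<and> walk E (b # xs)" by simp
next
  assume h: "{a, b} \<in> E \<and> walk E (b # xs)"
  show "walk E (a # b # xs)"
    unfolding walk_def
  proof (intro conjI allI impI)
    fix i assume "Suc i < length (a # b # xs)"
    with h show "{(a # b # xs) ! i, (a # b # xs) ! Suc i} \<in> E"
      unfolding walk_def by (cases i) auto
  qed simp
qed

lemma walk_append:
  "walk E xs \<Longrightarrow> walk E ys \<Longrightarrow> last xs = hd ys \<Longrightarrow> walk E (xs @ tl ys)"
proof (induction xs rule: induct_list012)
  case 1 then show ?case by (simp add: walk_def)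
next
  case (2 a)
  then have "ys = a # tl ys" by (cases ys) (auto simp: walk_def)
  with 2 show ?case by simp
next
  case (3 a b xs)
  then show ?case by (simp add: walk_Cons2)
qed

lemma walk_rev: "walk E xs \<Longrightarrow> walk E (rev xs)"
  unfolding walk_def
proof (intro conjI allI impI)
  fix i assume "xs \<noteq> [] \<and> (\<forall>i. Suc i < length xs \<longrightarrow> {xs ! i, xs ! Suc i} \<in> E)"
    and i: "Suc i < length (rev xs)"
  then have "{xs ! (length xs - Suc (Suc i)), xs ! Suc (length xs - Suc (Suc i))} \<in> E" by auto
  moreover have "Suc (length xs - Suc (Suc i)) = length xs - Suc i" using i by simp
  ultimately show "{rev xs ! i, rev xs ! Suc i} \<in> E"
    using i by (simp add: rev_nth insert_commute)
qed (simp add: walk_def)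

lemma walk_between_rev: "walk_between E u v xs \<Longrightarrow> walk_between E v u (rev xs)"
  unfolding walk_between_def using walk_rev by (auto simp: hd_rev last_rev walk_def)

lemma walk_between_append:
  assumes "walk_between E u v xs" and "walk_between E v w ys"
  shows "walk_between E u w (xs @ tl ys)" and "length (xs @ tl ys) = length xs + length ys - 1"
proof -
  have ne: "xs \<noteq> []" "ys \<noteq> []" using assms by (auto simp: walk_between_def walk_def)
  with assms show "walk_between E u w (xs @ tl ys)"
    unfolding walk_between_def using walk_append[of E xs ys] by (cases ys) auto
  show "length (xs @ tl ys) = length xs + length ys - 1" using ne by (cases ys) auto
qed

lemma walk_between_edge: "{u, v} \<in> E \<Longrightarrow> walk_between E u v [u, v]"
  by (simp add: walk_between_def walk_Cons2 walk_def)

lemma dist_eqI: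
  assumes "walk_between E u v xs" and "length xs = Suc n"
    and "\<And>ys. walk_between E u v ys \<Longrightarrow> Suc n \<le> length ys"
  shows "dist E u v = n"
  unfolding dist_def
proof (rule Least_equality)
  show "\<exists>xs. walk_between E u v xs \<and> length xs = Suc n" using assms(1,2) by blast
qed (use assms(3) in fastforce)

lemma diam_eqI:
  assumes "\<And>u v. u \<in> V \<Longrightarrow> v \<in> V \<Longrightarrow> dist E u v \<le> n"
    and "u \<in> V" and "v \<in> V" and "dist E u v = n"
  shows "diam V E = n"
  unfolding diam_def
proof (rule Max_eqI)
  show "finite {dist E u v | u v. u \<in> V \<and> v \<in> V}"
    by (rule finite_subset[of _ "{..n}"]) (auto dest: assms(1))
qed (use assms in auto)

lemma interval_coloring_le_card:
  assumes "finite E" and "has_interval_coloring V E t"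
  shows "t \<le> card E"
proof -
  obtain c where "interval_coloring V E t c"
    using assms(2) unfolding has_interval_coloring_def by blast
  then have "{1..t} \<subseteq> c ` E" unfolding interval_coloring_def by (metis image_eqI subsetI)
  then have "card {1..t} \<le> card (c ` E)" using assms(1) by (intro card_mono) simp_all
  also have "\<dots> \<le> card E" using assms(1) by (rule card_image_le)
  finally show ?thesis by simp
qed

lemma W_ge:
  assumes "finite E" and "has_interval_coloring V E t"
  shows "t \<le> W V E"
  unfolding W_def
proof (rule Max_ge)
  show "finite {t. has_interval_coloring V E t}"
    by (rule finite_subset[of _ "{..card E}"]) (auto dest: interval_coloring_le_card[OF assms(1)])
qed (use assms(2) in simp)

section \<open>An interval colouring of the complete graph on \<open>2^q\<close> vertices\<close>

lemma lessThan_double: "{..<2 * n} = {..<n} \<union> (\<lambda>z. z + n) ` {..<n::nat}"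
proof (rule set_eqI, rule iffI)
  fix y assume "y \<in> {..<2 * n}"
  then show "y \<in> {..<n} \<union> (\<lambda>z. z + n) ` {..<n}"
    by (cases "y < n") (auto intro: image_eqI[where x="y - n"])
qed auto

lemma image_shift_atLeastAtMost: "f ` A = {a..b::nat} \<Longrightarrow> (\<lambda>z. f z + c) ` A = {a + c..b + c}"
proof -
  assume "f ` A = {a..b}"
  then have "(\<lambda>n. n + c) ` f ` A = {a + c..b + c}" by simp
  then show ?thesis by (simp add: image_image)
qed

text \<open>\<open>clique_low q x = x + 1 - s(x)\<close>, with \<open>s(x)\<close> the binary digit sum of \<open>x\<close>.\<close>

fun clique_low :: "nat \<Rightarrow> nat \<Rightarrow> nat" where
  "clique_low 0 x = 1"
| "clique_low (Suc q) x = (if x < 2^q then clique_low q x else clique_low q (x - 2^q) + 2^q - 1)"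

text \<open>\<open>clique_col q\<close> colours the complete graph on \<open>{0, \<dots>, 2^q - 1}\<close>, and \<open>biclique_col q x y\<close>
is the colour of the edge from \<open>x\<close> to the copy \<open>y'\<close> of \<open>y\<close> in the complete bipartite graph on two
copies of that set. From \<open>q\<close> to \<open>q + 1\<close>, the complete graph splits into cliques on the two halves
and a complete bipartite graph between them; the bipartite graph splits into four blocks, one of
which is recoloured as a clique plus the perfect matching \<open>x x'\<close>.\<close>

fun clique_col :: "nat \<Rightarrow> nat \<Rightarrow> nat \<Rightarrow> nat"
  and biclique_col :: "nat \<Rightarrow> nat \<Rightarrow> nat \<Rightarrow> nat" where
  "clique_col 0 x y = 0"
| "clique_col (Suc q) x y =
     (if x < 2^q \<and> y < 2^q then clique_col q x y
      else if 2^q \<le> x \<and> 2^q \<le> y then clique_col q (x - 2^q) (y - 2^q) + 2 * 2^q - 1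
      else biclique_col q (x mod 2^q) (y mod 2^q) + 2^q - 1)"
| "biclique_col 0 x y = 1"
| "biclique_col (Suc q) x y =
     (if x < 2^q \<and> y < 2^q then (if x = y then clique_low q x + 2 * 2^q - 1 else clique_col q x y)
      else if 2^q \<le> x \<and> 2^q \<le> y then biclique_col q (x - 2^q) (y - 2^q) + 2 * 2^q - 1
      else biclique_col q (x mod 2^q) (y mod 2^q) + 2^q - 1)"

lemma clique_biclique_col_sym:
  "clique_col q x y = clique_col q y x \<and> biclique_col q x y = biclique_col q y x"
  by (induction q arbitrary: x y) auto

lemma clique_low_bounds: "x < 2^q \<Longrightarrow> 1 \<le> clique_low q x \<and> clique_low q x + q \<le> 2^q"
proof (induction q arbitrary: x)
  case (Suc q)
  have "(1::nat) \<le> 2^q" by simp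
  show ?case
  proof (cases "x < 2^q")
    case True
    with Suc.IH[of x] \<open>1 \<le> 2^q\<close> show ?thesis by simp
  next
    case False
    with Suc.prems have "x - 2^q < 2^q" by simp
    with Suc.IH[OF this] False \<open>1 \<le> 2^q\<close> show ?thesis by simp linarith
  qed
qed simp

lemma clique_low_0: "clique_low q 0 = 1"
  by (induction q) auto

lemma clique_low_last: "clique_low q (2^q - 1) + q = 2^q"
proof (induction q)
  case (Suc q)
  have "(1::nat) \<le> 2^q" by simp
  then have "\<not> (2::nat)^Suc q - 1 < 2^q" and "(2::nat)^Suc q - 1 - 2^q = 2^q - 1" by simp_all
  then have "clique_low (Suc q) (2^Suc q - 1) = clique_low q (2^q - 1) + 2^q - 1"
    by (simp only: clique_low.simps if_False)
  moreover have "(2::nat)^Suc q = 2 * 2^q" by simp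
  ultimately show ?case using Suc.IH \<open>1 \<le> 2^q\<close> by linarith
qed simp

definition interval_spectra :: "nat \<Rightarrow> nat \<Rightarrow> bool" where
  "interval_spectra q x \<longleftrightarrow>
     clique_col q x ` {y. y < 2^q \<and> y \<noteq> x} = {clique_low q x .. clique_low q x + 2^q - 2} \<and>
     biclique_col q x ` {..<2^q} = {clique_low q x .. clique_low q x + 2^q - 1}"

lemma interval_spectra_lower_half:
  assumes x: "x < 2^q" and spectra: "interval_spectra q x"
  shows "interval_spectra (Suc q) x"
proof -
  define n :: nat where "n = 2^q"
  define a where "a = clique_low q x"
  have n1: "1 \<le> n" and a1: "1 \<le> a" using clique_low_bounds[of x q] x by (simp_all add: n_def a_def)
  have xn: "x < n" using x by (simp add: n_def)
  have IH: "clique_col q x ` {y. y < n \<and> y \<noteq> x} = {a..a + n - 2}"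
           "biclique_col q x ` {..<n} = {a..a + n - 1}"
    using spectra by (simp_all add: interval_spectra_def n_def a_def)
  have low: "clique_low (Suc q) x = a" using x by (simp add: a_def)
  have halves: "{y. y < 2 * n \<and> y \<noteq> x} = {y. y < n \<and> y \<noteq> x} \<union> (\<lambda>z. z + n) ` {..<n}"
    using lessThan_double[of n] xn by auto
  have upper: "f (Suc q) x ` (\<lambda>z. z + n) ` {..<n} = {a + (n - 1)..a + n - 1 + (n - 1)}"
    if "f = clique_col \<or> f = biclique_col" for f
  proof -
    have "f (Suc q) x ` (\<lambda>z. z + n) ` {..<n} = (\<lambda>z. biclique_col q x z + (n - 1)) ` {..<n}"
      unfolding image_image using that xn by (intro image_cong) (auto simp: n_def)
    also have "\<dots> = {a + (n - 1)..a + n - 1 + (n - 1)}"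
      by (rule image_shift_atLeastAtMost[OF IH(2)])
    finally show ?thesis .
  qed
  have clique_lower: "clique_col (Suc q) x ` {y. y < n \<and> y \<noteq> x} = {a..a + n - 2}"
    unfolding IH(1)[symmetric] using xn by (intro image_cong) (auto simp: n_def)
  have biclique_lower: "biclique_col (Suc q) x ` {..<n} = insert (a + 2 * n - 1) {a..a + n - 2}"
  proof -
    have "{..<n} = insert x {y. y < n \<and> y \<noteq> x}" using xn by auto
    then have "biclique_col (Suc q) x ` {..<n}
        = insert (biclique_col (Suc q) x x) (biclique_col (Suc q) x ` {y. y < n \<and> y \<noteq> x})"
      by (metis image_insert)
    also have "biclique_col (Suc q) x ` {y. y < n \<and> y \<noteq> x} = {a..a + n - 2}"
      unfolding IH(1)[symmetric] using xn by (intro image_cong) (auto simp: n_def)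
    finally show ?thesis using xn by (simp add: n_def a_def)
  qed
  have "clique_col (Suc q) x ` {y. y < 2 * n \<and> y \<noteq> x} = {a..a + 2 * n - 2}"
    unfolding halves image_Un clique_lower upper[OF disjI1[OF refl]]
    using n1 a1 by auto
  moreover have "biclique_col (Suc q) x ` {..<2 * n} = {a..a + 2 * n - 1}"
    unfolding lessThan_double image_Un biclique_lower upper[OF disjI2[OF refl]]
    using n1 a1 by auto
  ultimately show ?thesis unfolding interval_spectra_def low power_Suc n_def[symmetric] by simp
qed

lemma interval_spectra_upper_half:
  assumes x: "x < 2^q" and spectra: "interval_spectra q x"
  shows "interval_spectra (Suc q) (x + 2^q)"
proof -
  define n :: nat where "n = 2^q"
  define a where "a = clique_low q x"
  have n1: "1 \<le> n" and a1: "1 \<le> a" using clique_low_bounds[of x q] x by (simp_all add: n_def a_def)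
  have xn: "x < n" using x by (simp add: n_def)
  have IH: "clique_col q x ` {y. y < n \<and> y \<noteq> x} = {a..a + n - 2}"
           "biclique_col q x ` {..<n} = {a..a + n - 1}"
    using spectra by (simp_all add: interval_spectra_def n_def a_def)
  have low: "clique_low (Suc q) (x + n) = a + n - 1" by (simp add: a_def n_def)
  have halves: "{y. y < 2 * n \<and> y \<noteq> x + n} = {..<n} \<union> (\<lambda>z. z + n) ` {y. y < n \<and> y \<noteq> x}"
  proof (rule set_eqI, rule iffI)
    fix y assume "y \<in> {y. y < 2 * n \<and> y \<noteq> x + n}"
    then show "y \<in> {..<n} \<union> (\<lambda>z. z + n) ` {y. y < n \<and> y \<noteq> x}"
      by (cases "y < n") (auto intro: image_eqI[where x="y - n"])
  qed auto
  have lower: "f (Suc q) (x + n) ` {..<n} = {a + (n - 1)..a + n - 1 + (n - 1)}"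
    if "f = clique_col \<or> f = biclique_col" for f
  proof -
    have "f (Suc q) (x + n) ` {..<n} = (\<lambda>z. biclique_col q x z + (n - 1)) ` {..<n}"
      using that xn by (intro image_cong) (auto simp: n_def)
    also have "\<dots> = {a + (n - 1)..a + n - 1 + (n - 1)}"
      by (rule image_shift_atLeastAtMost[OF IH(2)])
    finally show ?thesis .
  qed
  have clique_upper: "clique_col (Suc q) (x + n) ` (\<lambda>z. z + n) ` {y. y < n \<and> y \<noteq> x}
      = {a + (2 * n - 1)..a + n - 2 + (2 * n - 1)}"
  proof -
    have "clique_col (Suc q) (x + n) ` (\<lambda>z. z + n) ` {y. y < n \<and> y \<noteq> x}
        = (\<lambda>z. clique_col q x z + (2 * n - 1)) ` {y. y < n \<and> y \<noteq> x}"
      unfolding image_image by (intro image_cong) (auto simp: n_def)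
    also have "\<dots> = {a + (2 * n - 1)..a + n - 2 + (2 * n - 1)}"
      by (rule image_shift_atLeastAtMost[OF IH(1)])
    finally show ?thesis .
  qed
  have biclique_upper: "biclique_col (Suc q) (x + n) ` (\<lambda>z. z + n) ` {..<n}
      = {a + (2 * n - 1)..a + n - 1 + (2 * n - 1)}"
  proof -
    have "biclique_col (Suc q) (x + n) ` (\<lambda>z. z + n) ` {..<n}
        = (\<lambda>z. biclique_col q x z + (2 * n - 1)) ` {..<n}"
      unfolding image_image by (intro image_cong) (auto simp: n_def)
    also have "\<dots> = {a + (2 * n - 1)..a + n - 1 + (2 * n - 1)}"
      by (rule image_shift_atLeastAtMost[OF IH(2)])
    finally show ?thesis .
  qed
  have "clique_col (Suc q) (x + n) ` {y. y < 2 * n \<and> y \<noteq> x + n} = {a + n - 1..a + n - 1 + 2 * n - 2}"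
    unfolding halves image_Un clique_upper lower[OF disjI1[OF refl]] using n1 a1 by auto
  moreover have "biclique_col (Suc q) (x + n) ` {..<2 * n} = {a + n - 1..a + n - 1 + 2 * n - 1}"
    unfolding lessThan_double image_Un biclique_upper lower[OF disjI2[OF refl]] using n1 a1 by auto
  ultimately show ?thesis unfolding interval_spectra_def low power_Suc n_def[symmetric] by simp
qed

lemma interval_spectra: "x < 2^q \<Longrightarrow> interval_spectra q x"
proof (induction q arbitrary: x)
  case 0
  then show ?case by (auto simp: interval_spectra_def)
next
  case (Suc q)
  show ?case
  proof (cases "x < 2^q")
    case True
    then show ?thesis using Suc.IH interval_spectra_lower_half by blast
  next
    case False
    then have "x - 2^q < 2^q" using Suc.prems by simp
    then show ?thesis using Suc.IH interval_spectra_upper_half False by fastforce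
  qed
qed

section \<open>The product of a complete graph with a path\<close>

locale clique_path_product =
  fixes d q :: nat
  assumes d_pos: "1 \<le> d" and q_pos: "1 \<le> q"
begin

abbreviation N :: nat where "N \<equiv> 2^q"

abbreviation layer :: "nat \<Rightarrow> nat" where "layer v \<equiv> v div N"

abbreviation pos :: "nat \<Rightarrow> nat" where "pos v \<equiv> v mod N"

text \<open>The statement asks for a graph on \<open>nat\<close>: vertex \<open>x\<close> of layer \<open>j\<close> is the number \<open>j * N + x\<close>.\<close>

definition vtx :: "nat \<Rightarrow> nat \<Rightarrow> nat" where "vtx j x = j * N + x"

definition verts :: "nat set" where "verts = {..<d * N}"

definition adj :: "nat \<Rightarrow> nat \<Rightarrow> bool" where
  "adj u w \<longleftrightarrow> layer u = layer w \<or>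
     (pos u = pos w \<and> (layer u + 1 = layer w \<or> layer w + 1 = layer u))"

definition edges :: "nat set set" where
  "edges = {{u, w} | u w. u \<in> verts \<and> w \<in> verts \<and> u \<noteq> w \<and> adj u w}"

definition pair_col :: "nat \<Rightarrow> nat \<Rightarrow> nat" where
  "pair_col u w = (if layer u = layer w then clique_col q (pos u) (pos w) + layer u * N
     else clique_low q (pos u) + N - 1 + min (layer u) (layer w) * N)"

definition col :: "nat set \<Rightarrow> nat" where "col e = pair_col (Min e) (Max e)"

definition nbrs :: "nat \<Rightarrow> nat set" where "nbrs v = {w \<in> verts. w \<noteq> v \<and> adj v w}"

lemma N_ge_2: "2 \<le> N"
  using q_pos by (metis power_increasing power_one_right zero_less_numeral one_le_numeral)

lemma q_less_N: "q < N"
  by simp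

lemma layer_vtx [simp]: "x < N \<Longrightarrow> layer (vtx j x) = j"
  and pos_vtx [simp]: "x < N \<Longrightarrow> pos (vtx j x) = x"
  by (simp_all add: vtx_def)

lemma vtx_eq_iff: "x < N \<Longrightarrow> y < N \<Longrightarrow> vtx j x = vtx k y \<longleftrightarrow> j = k \<and> x = y"
  by (metis layer_vtx pos_vtx)

lemma vtx_in_verts [simp]: "x < N \<Longrightarrow> vtx j x \<in> verts \<longleftrightarrow> j < d"
  by (simp add: verts_def div_less_iff_less_mult[symmetric])

lemma verts_cases:
  assumes "v \<in> verts"
  obtains j x where "v = vtx j x" and "j < d" and "x < N"
proof
  show "v = vtx (layer v) (pos v)" unfolding vtx_def by (rule div_mult_mod_eq[symmetric])
  show "layer v < d" using assms by (simp add: verts_def div_less_iff_less_mult)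
qed simp

lemma adj_sym: "adj u w \<longleftrightarrow> adj w u"
  unfolding adj_def by auto

lemma adj_vtx:
  "x < N \<Longrightarrow> y < N \<Longrightarrow> adj (vtx j x) (vtx k y) \<longleftrightarrow> j = k \<or> (x = y \<and> (j + 1 = k \<or> k + 1 = j))"
  by (simp add: adj_def)

lemma edges_graph: "graph verts edges"
  unfolding graph_def edges_def verts_def by auto

lemma finite_edges: "finite edges"
proof -
  have "edges \<subseteq> Pow verts" unfolding edges_def by auto
  then show ?thesis unfolding verts_def by (simp add: finite_subset)
qed

lemma pair_in_edges: "{u, w} \<in> edges \<longleftrightarrow> u \<in> verts \<and> w \<in> verts \<and> u \<noteq> w \<and> adj u w"
  unfolding edges_def using adj_sym by (auto simp: doubleton_eq_iff)

lemma pair_col_sym: "adj u w \<Longrightarrow> pair_col u w = pair_col w u"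
  unfolding pair_col_def adj_def using clique_biclique_col_sym by (auto simp: min.commute)

lemma col_pair: assumes "adj u w" shows "col {u, w} = pair_col u w"
  unfolding col_def using pair_col_sym[OF assms] by (cases "u \<le> w") (auto simp: min_def max_def)

lemma edges_at_eq: "v \<in> verts \<Longrightarrow> edges_at edges v = (\<lambda>w. {v, w}) ` nbrs v"
  unfolding edges_at_def nbrs_def edges_def using adj_sym by (auto simp: insert_commute)

lemma nbrs_vtx:
  assumes "j < d" and "x < N"
  shows "nbrs (vtx j x) = vtx j ` {y. y < N \<and> y \<noteq> x}
     \<union> (if 0 < j then {vtx (j - 1) x} else {}) \<union> (if j + 1 < d then {vtx (j + 1) x} else {})"
proof (rule set_eqI)
  fix w
  show "w \<in> nbrs (vtx j x) \<longleftrightarrow> w \<in> vtx j ` {y. y < N \<and> y \<noteq> x}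
     \<union> (if 0 < j then {vtx (j - 1) x} else {}) \<union> (if j + 1 < d then {vtx (j + 1) x} else {})"
  proof (cases "w \<in> verts")
    case True
    then obtain k y where "w = vtx k y" "k < d" "y < N" by (rule verts_cases)
    then show ?thesis using assms
      by (auto simp: nbrs_def adj_vtx vtx_eq_iff image_iff)
  next
    case False
    then show ?thesis using assms by (auto simp: nbrs_def)
  qed
qed

definition spectrum_min :: "nat \<Rightarrow> nat \<Rightarrow> nat" where
  "spectrum_min j x = clique_low q x + j * N - (if 0 < j then 1 else 0)"

definition spectrum_max :: "nat \<Rightarrow> nat \<Rightarrow> nat" where
  "spectrum_max j x = clique_low q x + j * N + N - 2 + (if j + 1 < d then 1 else 0)"

lemma pair_col_image:
  assumes j: "j < d" and x: "x < N"
  shows "pair_col (vtx j x) ` nbrs (vtx j x) = {spectrum_min j x..spectrum_max j x}"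
proof -
  define A where "A = clique_low q x + j * N"
  have A1: "1 \<le> A" using clique_low_bounds[OF x] by (simp add: A_def)
  have "pair_col (vtx j x) ` vtx j ` {y. y < N \<and> y \<noteq> x}
      = (\<lambda>y. clique_col q x y + j * N) ` {y. y < N \<and> y \<noteq> x}"
    unfolding image_image using x by (intro image_cong) (auto simp: pair_col_def)
  also have "\<dots> = {clique_low q x + j * N..clique_low q x + N - 2 + j * N}"
    using interval_spectra[OF x] unfolding interval_spectra_def by (intro image_shift_atLeastAtMost) simp
  also have "\<dots> = {A..A + N - 2}"
    unfolding A_def using N_ge_2 by (simp add: algebra_simps)
  finally have clique: "pair_col (vtx j x) ` vtx j ` {y. y < N \<and> y \<noteq> x} = {A..A + N - 2}" .
  have below: "pair_col (vtx j x) (vtx (j - 1) x) = A - 1" if "0 < j"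
  proof -
    have "(j - 1) * N + N = j * N" using that by (cases j) auto
    with that x show ?thesis by (auto simp: pair_col_def A_def)
  qed
  have above: "pair_col (vtx j x) (vtx (j + 1) x) = A + N - 1"
    using x N_ge_2 by (simp add: pair_col_def A_def)
  have "pair_col (vtx j x) ` nbrs (vtx j x) = {A..A + N - 2}
      \<union> (if 0 < j then {A - 1} else {}) \<union> (if j + 1 < d then {A + N - 1} else {})"
    unfolding nbrs_vtx[OF j x] image_Un clique using below above by auto
  also have "\<dots> = {spectrum_min j x..spectrum_max j x}"
    unfolding spectrum_min_def spectrum_max_def A_def[symmetric] using A1 N_ge_2 by auto
  finally show ?thesis .
qed

lemma card_nbrs_le:
  assumes "j < d" and x: "x < N"
  shows "card (nbrs (vtx j x)) \<le> N - 1 + (if 0 < j then 1 else 0) + (if j + 1 < d then 1 else 0)"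
proof -
  have "{y. y < N \<and> y \<noteq> x} = {..<N} - {x}" by auto
  then have clique: "card (vtx j ` {y. y < N \<and> y \<noteq> x}) = N - 1"
    using x by (subst card_image) (auto simp: inj_on_def vtx_def)
  show ?thesis unfolding nbrs_vtx[OF assms]
    by (rule order_trans[OF card_Un_le], rule add_mono[OF order_trans[OF card_Un_le]])
      (auto simp: clique)
qed

lemma spectrum_length:
  "x < N \<Longrightarrow> Suc (spectrum_max j x) - spectrum_min j x
     = N - 1 + (if 0 < j then 1 else 0) + (if j + 1 < d then 1 else 0)"
  unfolding spectrum_max_def spectrum_min_def using N_ge_2 clique_low_bounds[of x q] by auto

lemma inj_on_pair_col:
  assumes "j < d" and "x < N"
  shows "inj_on (pair_col (vtx j x)) (nbrs (vtx j x))"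
proof (rule eq_card_imp_inj_on)
  show fin: "finite (nbrs (vtx j x))" by (simp add: nbrs_def verts_def)
  have "card (nbrs (vtx j x)) \<le> card (pair_col (vtx j x) ` nbrs (vtx j x))"
    using card_nbrs_le[OF assms] spectrum_length[OF assms(2)] pair_col_image[OF assms] by simp
  then show "card (pair_col (vtx j x) ` nbrs (vtx j x)) = card (nbrs (vtx j x))"
    using card_image_le[OF fin] by (intro antisym)
qed

lemma col_edges_at:
  assumes "j < d" and "x < N"
  shows "col ` edges_at edges (vtx j x) = {spectrum_min j x..spectrum_max j x}"
    and "inj_on col (edges_at edges (vtx j x))"
proof -
  have v: "vtx j x \<in> verts" using assms by simp
  have eq: "col ({vtx j x, w}) = pair_col (vtx j x) w" if "w \<in> nbrs (vtx j x)" for w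
    using that by (simp add: nbrs_def col_pair)
  show "col ` edges_at edges (vtx j x) = {spectrum_min j x..spectrum_max j x}"
    unfolding edges_at_eq[OF v] image_image using eq pair_col_image[OF assms]
    by (metis (no_types, lifting) image_cong)
  show "inj_on col (edges_at edges (vtx j x))"
    unfolding edges_at_eq[OF v]
  proof (rule inj_on_imageI)
    show "inj_on (col \<circ> (\<lambda>w. {vtx j x, w})) (nbrs (vtx j x))"
      using inj_on_pair_col[OF assms] by (rule inj_on_cong[THEN iffD2, rotated]) (simp add: eq)
  qed
qed

lemma degree_vtx:
  assumes "j < d" and "x < N"
  shows "degree edges (vtx j x) = N - 1 + (if 0 < j then 1 else 0) + (if j + 1 < d then 1 else 0)"
  using card_image[OF col_edges_at(2)[OF assms]] col_edges_at(1)[OF assms] spectrum_length[OF assms(2)]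
  by (simp add: degree_def)

definition num_colors :: nat where "num_colors = (d + 1) * N - q - 2"

lemma spectrum_bounds:
  assumes "j < d" and x: "x < N"
  shows "1 \<le> spectrum_min j x" and "spectrum_max j x \<le> num_colors"
proof -
  have a: "1 \<le> clique_low q x" "clique_low q x + q \<le> N" using clique_low_bounds[OF x] by auto
  have total: "(d + 1) * N = (d - 1) * N + 2 * N" using d_pos by (cases d) auto
  show "1 \<le> spectrum_min j x"
  proof (cases "0 < j")
    case True
    then have "N \<le> j * N" and "spectrum_min j x = clique_low q x + j * N - 1"
      by (simp_all add: spectrum_min_def)
    then show ?thesis using a N_ge_2 by linarith
  qed (use a in \<open>simp add: spectrum_min_def\<close>)
  show "spectrum_max j x \<le> num_colors"
  proof (cases "j + 1 < d")
    case True
    then have "(j + 1) * N \<le> (d - 1) * N" by (intro mult_right_mono) auto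
    then show ?thesis using a N_ge_2 True total by (simp add: spectrum_max_def num_colors_def)
  next
    case False
    have "j * N \<le> (d - 1) * N" using assms(1) by (intro mult_right_mono) auto
    moreover have "spectrum_max j x = clique_low q x + j * N + N - 2" using False by (simp add: spectrum_max_def)
    ultimately show ?thesis using a N_ge_2 total unfolding num_colors_def by linarith
  qed
qed

lemma layer_spectra_cover:
  assumes "j < d" and "1 \<le> i" and "j * N \<le> i" and "i \<le> j * N + 2 * N - q - 2"
  shows "\<exists>x<N. i \<in> {spectrum_min j x..spectrum_max j x}"
proof (cases "i \<le> j * N + N - 1")
  case True
  then have "i \<in> {spectrum_min j 0..spectrum_max j 0}"
    using assms by (cases j) (auto simp: spectrum_min_def spectrum_max_def clique_low_0)
  then show ?thesis by (intro exI[of _ 0]) simp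
next
  case False
  have "clique_low q (N - 1) = N - q" using clique_low_last[of q] by simp
  then have "i \<in> {spectrum_min j (N - 1)..spectrum_max j (N - 1)}"
    using assms False N_ge_2 by (auto simp: spectrum_min_def spectrum_max_def)
  then show ?thesis by (intro exI[of _ "N - 1"]) simp
qed

lemma colors_used:
  assumes "1 \<le> i" and "i \<le> num_colors"
  shows "\<exists>e\<in>edges. col e = i"
proof -
  define j where "j = min (i div N) (d - 1)"
  have "j < d" using d_pos by (simp add: j_def)
  moreover have "j * N \<le> i"
  proof -
    have "j * N \<le> i div N * N" by (intro mult_right_mono) (simp_all add: j_def)
    also have "\<dots> \<le> i" by simp
    finally show ?thesis .
  qed
  moreover have "i \<le> j * N + 2 * N - q - 2"
  proof (cases "i div N \<le> d - 1")
    case True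
    have "i mod N < N" by simp
    then have "i < i div N * N + N" using div_mult_mod_eq[of i N] by linarith
    moreover have "j = i div N" using True by (simp add: j_def)
    ultimately have "i < j * N + N" by simp
    then show ?thesis using q_less_N by linarith
  next
    case False
    have "(d + 1) * N = (d - 1) * N + 2 * N" using d_pos by (cases d) auto
    then show ?thesis using False assms(2) by (simp add: j_def num_colors_def)
  qed
  ultimately obtain x where "x < N" "i \<in> {spectrum_min j x..spectrum_max j x}"
    using layer_spectra_cover assms(1) by blast
  then have "i \<in> col ` edges_at edges (vtx j x)" using col_edges_at(1) \<open>j < d\<close> by blast
  then show ?thesis by (auto simp: edges_at_def)
qed

lemma col_range:
  assumes "e \<in> edges"
  shows "col e \<in> {1..num_colors}"
proof -
  obtain u w where e: "e = {u, w}" "u \<in> verts" by (use assms in \<open>auto simp: edges_def\<close>)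
  obtain j x where u: "u = vtx j x" "j < d" "x < N" using e(2) by (rule verts_cases)
  have "e \<in> edges_at edges (vtx j x)" using assms e u by (simp add: edges_at_def)
  then have "col e \<in> {spectrum_min j x..spectrum_max j x}" using col_edges_at(1)[OF u(2,3)] by blast
  then show ?thesis using spectrum_bounds[OF u(2,3)] by auto
qed

lemma interval_coloring_col: "interval_coloring verts edges num_colors col"
  unfolding interval_coloring_def
proof (intro conjI ballI)
  fix v assume "v \<in> verts"
  then obtain j x where "v = vtx j x" "j < d" "x < N" by (rule verts_cases)
  then show "inj_on col (edges_at edges v)" and "\<exists>a b. col ` edges_at edges v = {a..b}"
    using col_edges_at by blast+
qed (use col_range colors_used in auto)

lemma has_interval_coloring: "has_interval_coloring verts edges num_colors"
proof -
  have "1 \<le> spectrum_max 0 0" using N_ge_2 by (simp add: spectrum_max_def clique_low_0)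
  then have "1 \<le> num_colors" using spectrum_bounds(2)[of 0 0] d_pos by simp
  then show ?thesis using interval_coloring_col by (auto simp: has_interval_coloring_def)
qed

definition hops :: "nat \<Rightarrow> nat \<Rightarrow> nat" where
  "hops u w = max (layer u) (layer w) - min (layer u) (layer w) + (if pos u = pos w then 0 else 1)"

lemma hops_vtx:
  "x < N \<Longrightarrow> y < N \<Longrightarrow> hops (vtx j x) (vtx k y) = max j k - min j k + (if x = y then 0 else 1)"
  by (simp add: hops_def)

lemma hops_le_edge: "{u, v} \<in> edges \<Longrightarrow> hops u w \<le> hops v w + 1"
  unfolding pair_in_edges adj_def hops_def by auto

lemma hops_le_walk: "walk edges xs \<Longrightarrow> hops (hd xs) (last xs) + 1 \<le> length xs"
proof (induction xs rule: induct_list012)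
  case (2 x)
  then show ?case by (simp add: hops_def)
next
  case (3 u v xs)
  then have "{u, v} \<in> edges" and "hops v (last (v # xs)) + 1 \<le> length (v # xs)"
    by (simp_all add: walk_Cons2)
  with hops_le_edge[of u v "last (v # xs)"] show ?case by simp
qed (simp add: walk_def)

lemma column_walk:
  assumes "x < N" and "j + k < d"
  shows "\<exists>xs. walk_between edges (vtx j x) (vtx (j + k) x) xs \<and> length xs = Suc k"
  using assms(2)
proof (induction k)
  case 0
  show ?case by (intro exI[of _ "[vtx j x]"]) (simp add: walk_between_def walk_def)
next
  case (Suc k)
  then obtain xs where xs: "walk_between edges (vtx j x) (vtx (j + k) x) xs" "length xs = Suc k"
    by auto
  have "{vtx (j + k) x, vtx (j + Suc k) x} \<in> edges"
    using assms(1) Suc.prems by (simp add: pair_in_edges adj_vtx vtx_eq_iff)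
  from walk_between_append[OF xs(1) walk_between_edge[OF this]] xs(2) show ?case by auto
qed

lemma column_walk_between:
  assumes "x < N" and "j < d" and "k < d"
  shows "\<exists>xs. walk_between edges (vtx j x) (vtx k x) xs \<and> length xs = Suc (max j k - min j k)"
proof (cases "j \<le> k")
  case True
  then show ?thesis using column_walk[OF assms(1), of j "k - j"] assms(3) by (simp add: max_def min_def)
next
  case False
  then obtain xs where "walk_between edges (vtx k x) (vtx j x) xs" "length xs = Suc (j - k)"
    using column_walk[OF assms(1), of k "j - k"] assms(2) by auto
  then show ?thesis using False walk_between_rev by (intro exI[of _ "rev xs"]) (auto simp: max_def min_def)
qed

lemma walk_of_length_hops:
  assumes "u \<in> verts" and "w \<in> verts"
  shows "\<exists>xs. walk_between edges u w xs \<and> length xs = Suc (hops u w)"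
proof -
  obtain j x where u: "u = vtx j x" "j < d" "x < N" using assms(1) by (rule verts_cases)
  obtain k y where w: "w = vtx k y" "k < d" "y < N" using assms(2) by (rule verts_cases)
  obtain ys where ys: "walk_between edges u (vtx j y) ys" "length ys = (if x = y then 1 else 2)"
  proof (cases "x = y")
    case True
    then show ?thesis using that[of "[u]"] u by (simp add: walk_between_def walk_def)
  next
    case False
    then have e: "{u, vtx j y} \<in> edges" using u w by (simp add: pair_in_edges adj_vtx vtx_eq_iff)
    then show ?thesis using that[of "[u, vtx j y]"] walk_between_edge[OF e] False by simp
  qed
  obtain zs where zs: "walk_between edges (vtx j y) w zs" "length zs = Suc (max j k - min j k)"
    using column_walk_between[OF w(3) u(2) w(2)] w(1) by blast
  show ?thesis
    using walk_between_append[OF ys(1) zs(1)] ys(2) zs(2) u w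
    by (intro exI[of _ "ys @ tl zs"]) (auto simp: hops_vtx)
qed

lemma dist_eq_hops:
  assumes "u \<in> verts" and "w \<in> verts"
  shows "dist edges u w = hops u w"
proof -
  obtain xs where "walk_between edges u w xs" "length xs = Suc (hops u w)"
    using walk_of_length_hops[OF assms] by blast
  then show ?thesis
  proof (rule dist_eqI)
    fix ys assume "walk_between edges u w ys"
    then show "Suc (hops u w) \<le> length ys" using hops_le_walk[of ys] by (simp add: walk_between_def)
  qed
qed

lemma connected_graph: "connected_graph verts edges"
proof -
  have "vtx 0 0 \<in> verts" using d_pos by simp
  then show ?thesis
    unfolding connected_graph_def using edges_graph walk_of_length_hops by blast
qed

lemma diam_eq: "diam verts edges = d"
proof (rule diam_eqI)
  fix u w assume "u \<in> verts" "w \<in> verts"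
  then show "dist edges u w \<le> d"
    by (elim verts_cases) (auto simp: dist_eq_hops hops_vtx)
next
  show "vtx 0 0 \<in> verts" and "vtx (d - 1) 1 \<in> verts" using d_pos N_ge_2 by simp_all
  then show "dist edges (vtx 0 0) (vtx (d - 1) 1) = d"
    using d_pos N_ge_2 by (simp add: dist_eq_hops hops_vtx)
qed

lemma max_degree_eq:
  "max_degree verts edges = N - 1 + (if 2 \<le> d then 1 else 0) + (if 3 \<le> d then 1 else 0)"
  unfolding max_degree_def
proof (rule Max_eqI)
  fix n assume "n \<in> degree edges ` verts"
  then obtain j x where "n = degree edges (vtx j x)" "j < d" "x < N"
    by (auto elim: verts_cases)
  then show "n \<le> N - 1 + (if 2 \<le> d then 1 else 0) + (if 3 \<le> d then 1 else 0)"
    by (simp add: degree_vtx)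
next
  define j where "j = (if 3 \<le> d then 1 else 0 :: nat)"
  have "j < d" and "degree edges (vtx j 0) = N - 1 + (if 2 \<le> d then 1 else 0) + (if 3 \<le> d then 1 else 0)"
    using d_pos by (auto simp: j_def degree_vtx)
  then show "N - 1 + (if 2 \<le> d then 1 else 0) + (if 3 \<le> d then 1 else 0) \<in> degree edges ` verts"
    by (metis image_eqI vtx_in_verts zero_less_numeral zero_less_power)
qed (simp add: verts_def)

lemma int_num_colors: "int num_colors = int (d + 1) * int N - int q - 2"
proof -
  have "2 * N \<le> (d + 1) * N" using d_pos by (intro mult_right_mono) auto
  then have "q + 2 \<le> (d + 1) * N" using q_less_N by linarith
  then show ?thesis unfolding num_colors_def by (simp add: of_nat_diff algebra_simps)
qed

end

theorem theorem5:
  fixes d q :: nat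
  assumes "d \<ge> 1" and "q \<ge> 1"
  shows "\<exists>(V :: nat set) E.
           connected_graph V E \<and> diam V E = d \<and>
           max_degree V E = (if d = 1 then 2 ^ q - 1 else if d = 2 then 2 ^ q else 2 ^ q + 1) \<and>
           in_N V E \<and>
           int (W V E) \<ge> int (d + 1) * (int (max_degree V E) - 1) - int q
                          + (if d = 1 then 2 else if d = 2 then 1 else -2)"
proof -
  interpret clique_path_product d q using assms by unfold_locales
  have degree: "max_degree verts edges = (if d = 1 then N - 1 else if d = 2 then N else N + 1)"
    using max_degree_eq N_ge_2 d_pos by auto
  have "int num_colors \<le> int (W verts edges)"
    using W_ge[OF finite_edges has_interval_coloring] by simp
  then have "int (W verts edges) \<ge> int (d + 1) * (int (max_degree verts edges) - 1) - int q
                + (if d = 1 then 2 else if d = 2 then 1 else -2)"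
    unfolding int_num_colors degree using N_ge_2 by (auto simp: of_nat_diff algebra_simps)
  moreover have "in_N verts edges" using has_interval_coloring by (auto simp: in_N_def)
  ultimately show ?thesis using connected_graph diam_eq degree by blast
qed

end
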